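(* Let $\mathcal M_R$ be the set of paravector-valued functions $f=\sum_{j=0}^7f_je_j$ on $\mathbb R^8$ (with partial derivatives) satisfying $\partial_xf=0$, equivalently the Riesz system $\partial_{x_0}f_0-\sum_{i=1}^7\partial_{x_i}f_i=0$, $\partial_{x_0}f_i+\partial_{x_i}f_0=0$ ($1\le i\le7$), $\partial_{x_i}f_j-\partial_{x_j}f_i=0$ ($1\le i\ne j\le 7$). Then \[ \mathcal M_R\subsetneq\{f:\partial_xfI=0\}=\{f:[\partial_xfI]_j=0,\ j=0,1,2\}. \] For instance $f=x_2e_1-x_7e_4$ satisfies $\partial_xf=e_4e_7-e_1e_2\neq0$ but $[\partial_xfI]_j=0$ for $j=0,1,2$.
   Context: $\mathrm{Cl}_{0,7}$ is the real associative Clifford algebra generated by $e_1,\dots,e_7$ with $e_ie_j+e_je_i=-2\delta_{ij}$ and $e_0=1$; $e_{i_1\cdots i_k}=e_{i_1}\cdots e_{i_k}$; $[c]_k$ is the grade-$k$ part of $c$. $\partial_xf=\sum_{i,j=0}^7e_ie_j\,\partial_{x_i}f_j$. $W=e_{123}+e_{145}+e_{176}+e_{246}+e_{257}+e_{347}+e_{365}$ and $I=\frac1{16}(1+We_{1234567})(1-e_{1234567})$. *)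

theory Defs
  imports "HOL-Analysis.Analysis"
begin

text \<open>An element of Cl_{0,7} is represented by its coefficient function on
 basis blades e_A, A a subset of {1..7} (listed increasingly); coefficients of
 sets not contained in {1..7} are irrelevant and are produced as 0 by all operations.\<close>

type_synonym cl = "nat set \<Rightarrow> real"

definition clzero :: cl where "clzero = (\<lambda>_. 0)"
definition cladd :: "cl \<Rightarrow> cl \<Rightarrow> cl" where "cladd x y = (\<lambda>A. x A + y A)"
definition clsub :: "cl \<Rightarrow> cl \<Rightarrow> cl" where "clsub x y = (\<lambda>A. x A - y A)"
definition clscale :: "real \<Rightarrow> cl \<Rightarrow> cl" where "clscale r x = (\<lambda>A. r * x A)"

definition blade :: "nat set \<Rightarrow> cl" where "blade B = (\<lambda>A. if A = B then 1 else 0)"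

text \<open>Sign of e_A e_B = sign * e_(A symdiff B) when e_i e_j + e_j e_i = -2 delta_ij.\<close>
definition blade_sign :: "nat set \<Rightarrow> nat set \<Rightarrow> real" where
  "blade_sign A B = (-1) ^ (card {(a,b). a \<in> A \<and> b \<in> B \<and> b < a} + card (A \<inter> B))"

definition clmul :: "cl \<Rightarrow> cl \<Rightarrow> cl" where
  "clmul x y = (\<lambda>C. \<Sum>A\<in>Pow {1..7}. \<Sum>B\<in>Pow {1..7}.
      if (A - B) \<union> (B - A) = C then blade_sign A B * x A * y B else 0)"

definition clone :: cl where "clone = blade {}"

text \<open>index set of e_j, with e_0 = 1\<close>
definition idx :: "nat \<Rightarrow> nat set" where "idx j = (if j = 0 then {} else {j})"

definition e :: "nat \<Rightarrow> cl" where "e j = blade (idx j)"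

definition E :: "nat list \<Rightarrow> cl" where "E is = foldr (\<lambda>i c. clmul (e i) c) is clone"

definition grade :: "nat \<Rightarrow> cl \<Rightarrow> cl" where
  "grade k c = (\<lambda>A. if card A = k then c A else 0)"

definition W :: cl where
  "W = cladd (E [1,2,3]) (cladd (E [1,4,5]) (cladd (E [1,7,6]) (cladd (E [2,4,6])
        (cladd (E [2,5,7]) (cladd (E [3,4,7]) (E [3,6,5]))))))"

definition Icl :: cl where
  "Icl = clscale (1/16) (clmul (cladd clone (clmul W (E [1,2,3,4,5,6,7])))
                              (clsub clone (E [1,2,3,4,5,6,7])))"

text \<open>Coordinate x_i of x in R^8 (i = 0..7) is x \$ of_nat i.\<close>
definition coord_upd :: "real^8 \<Rightarrow> nat \<Rightarrow> real \<Rightarrow> real^8" where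
  "coord_upd x i t = (\<chi> k. if k = (of_nat i :: 8) then t else x $ k)"

definition partial :: "(real^8 \<Rightarrow> real) \<Rightarrow> nat \<Rightarrow> real^8 \<Rightarrow> real" where
  "partial g i x = deriv (\<lambda>t. g (coord_upd x i t)) (x $ (of_nat i :: 8))"

definition paravector :: "cl \<Rightarrow> bool" where
  "paravector c \<longleftrightarrow> (\<forall>A. (\<forall>j\<le>7. A \<noteq> idx j) \<longrightarrow> c A = 0)"

definition comp :: "(real^8 \<Rightarrow> cl) \<Rightarrow> nat \<Rightarrow> real^8 \<Rightarrow> real" where
  "comp f j x = f x (idx j)"

definition has_partials :: "(real^8 \<Rightarrow> cl) \<Rightarrow> bool" where
  "has_partials f \<longleftrightarrow> (\<forall>j\<le>7. \<forall>i\<le>7. \<forall>x.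
      (\<lambda>t. comp f j (coord_upd x i t)) differentiable (at (x $ (of_nat i :: 8))))"

definition paravector_functions :: "(real^8 \<Rightarrow> cl) set" where
  "paravector_functions = {f. (\<forall>x. paravector (f x)) \<and> has_partials f}"

definition dirac :: "(real^8 \<Rightarrow> cl) \<Rightarrow> real^8 \<Rightarrow> cl" where
  "dirac f x = (\<lambda>C. \<Sum>i\<le>7. \<Sum>j\<le>7. clmul (e i) (e j) C * partial (comp f j) i x)"

definition M_R :: "(real^8 \<Rightarrow> cl) set" where
  "M_R = {f \<in> paravector_functions. \<forall>x. dirac f x = clzero}"

definition riesz :: "(real^8 \<Rightarrow> cl) \<Rightarrow> bool" where
  "riesz f \<longleftrightarrow> (\<forall>x.
     partial (comp f 0) 0 x - (\<Sum>i\<in>{1..7}. partial (comp f i) i x) = 0 \<and>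
     (\<forall>i\<in>{1..7}. partial (comp f i) 0 x + partial (comp f 0) i x = 0) \<and>
     (\<forall>i\<in>{1..7}. \<forall>j\<in>{1..7}. i \<noteq> j \<longrightarrow> partial (comp f j) i x - partial (comp f i) j x = 0))"

end

theory Submission
  imports Defs
begin

(* The Dirac derivative d_x f of a paravector field is a combination of the products e_i e_j,
   so it has grade at most 2, and its coefficients at 1, e_k and e_a e_b are exactly the
   left-hand sides of the Riesz system. Right multiplication by I sends an element x of grade
   at most 2 into the span of the eight elements e_j I, and u = x I is recovered from its
   scalar and vector coefficients u_j as u = 16 (u_0 e_0 I + ... + u_7 e_7 I); hence d_x f I
   vanishes as soon as its parts of grade 0 and 1 do. The inclusion of M_R is strict because
   e_4 e_7 I = e_1 e_2 I. *)

section \<open>Products of basis blades\<close>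

lemma clmul_add_left: "clmul (cladd x y) z = cladd (clmul x z) (clmul y z)"
  unfolding clmul_def cladd_def
  by (rule ext) (simp add: sum.distrib[symmetric] if_distrib[where f="\<lambda>x. x + _"] algebra_simps cong: if_cong)

lemma clmul_add_right: "clmul z (cladd x y) = cladd (clmul z x) (clmul z y)"
  unfolding clmul_def cladd_def
  by (rule ext) (simp add: sum.distrib[symmetric] if_distrib[where f="\<lambda>x. x + _"] algebra_simps cong: if_cong)

lemma clmul_scale_left: "clmul (clscale r x) z = clscale r (clmul x z)"
  unfolding clmul_def clscale_def
  by (rule ext) (simp add: sum_distrib_left if_distrib algebra_simps cong: if_cong)

lemma clmul_scale_right: "clmul z (clscale r x) = clscale r (clmul z x)"
  unfolding clmul_def clscale_def
  by (rule ext) (simp add: sum_distrib_left if_distrib algebra_simps cong: if_cong)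

lemma clmul_zero_left [simp]: "clmul clzero z = clzero"
  unfolding clmul_def clzero_def by (rule ext) (simp only: mult_zero_right mult_zero_left, simp)

lemma clmul_zero_right [simp]: "clmul z clzero = clzero"
  unfolding clmul_def clzero_def by (rule ext) (simp only: mult_zero_right mult_zero_left, simp)

lemma clmul_blade:
  assumes "A \<subseteq> {1..7}" "B \<subseteq> {1..7}"
  shows "clmul (blade A) (blade B) = clscale (blade_sign A B) (blade ((A - B) \<union> (B - A)))"
proof (rule ext)
  fix C
  have "(if (A' - B') \<union> (B' - A') = C then blade_sign A' B' * blade A A' * blade B B' else 0)
     = (if B' = B then if A' = A then if (A - B) \<union> (B - A) = C then blade_sign A B else 0 else 0 else 0)"
    for A' B' by (simp add: blade_def)
  then show "clmul (blade A) (blade B) C = clscale (blade_sign A B) (blade ((A - B) \<union> (B - A))) C"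
    unfolding clmul_def using assms by (simp add: clscale_def blade_def sum.delta)
qed

lemma clmul_expand_left:
  "clmul x z C = (\<Sum>A\<in>Pow {1..7}. x A * clmul (blade A) z C)"
proof -
  have "clmul (blade A) z C = (\<Sum>B\<in>Pow {1..7}. if (A - B) \<union> (B - A) = C then blade_sign A B * z B else 0)"
    if "A \<in> Pow {1..7}" for A
  proof -
    have "(if (A' - B) \<union> (B - A') = C then blade_sign A' B * blade A A' * z B else 0)
       = (if A' = A then if (A - B) \<union> (B - A) = C then blade_sign A B * z B else 0 else 0)" for A' B
      by (simp add: blade_def)
    then show ?thesis
      unfolding clmul_def using that by (subst sum.swap) (simp add: sum.delta)
  qed
  then show ?thesis
    by (simp add: clmul_def[of x] sum_distrib_left if_distrib[of "\<lambda>u. x _ * u"] mult_ac cong: if_cong)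
qed

definition key_mul :: "nat list \<Rightarrow> nat list \<Rightarrow> nat list" where
  "key_mul xs ys = sort (filter (\<lambda>a. a \<notin> set ys) xs @ filter (\<lambda>b. b \<notin> set xs) ys)"

definition key_sign :: "nat list \<Rightarrow> nat list \<Rightarrow> int" where
  "key_sign xs ys = (-1) ^ (length (filter (\<lambda>(a, b). b < a) (List.product xs ys))
                          + length (filter (\<lambda>a. a \<in> set ys) xs))"

definition is_key :: "nat list \<Rightarrow> bool" where
  "is_key xs \<longleftrightarrow> sorted_wrt (<) xs \<and> set xs \<subseteq> {1..7}"

lemma set_key_mul: "set (key_mul xs ys) = (set xs - set ys) \<union> (set ys - set xs)"
  by (auto simp: key_mul_def)

lemma is_key_key_mul: "is_key xs \<Longrightarrow> is_key ys \<Longrightarrow> is_key (key_mul xs ys)"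
proof -
  assume "is_key xs" "is_key ys"
  then have "distinct (filter (\<lambda>a. a \<notin> set ys) xs @ filter (\<lambda>b. b \<notin> set xs) ys)"
    by (auto simp: is_key_def strict_sorted_iff)
  then show ?thesis
    using \<open>is_key xs\<close> \<open>is_key ys\<close>
    by (auto simp: is_key_def key_mul_def strict_sorted_iff)
qed

lemma blade_sign_set:
  assumes "distinct xs" "distinct ys"
  shows "blade_sign (set xs) (set ys) = of_int (key_sign xs ys)"
proof -
  have "{(a, b). a \<in> set xs \<and> b \<in> set ys \<and> b < a} = set (filter (\<lambda>(a, b). b < a) (List.product xs ys))"
    by auto
  moreover have "set xs \<inter> set ys = set (filter (\<lambda>a. a \<in> set ys) xs)"
    by auto
  ultimately show ?thesis
    unfolding blade_sign_def key_sign_def using assms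
    by (simp add: distinct_card distinct_product del: set_filter)
qed

lemma clmul_blade_key:
  assumes "is_key xs" "is_key ys"
  shows "clmul (blade (set xs)) (blade (set ys))
     = clscale (of_int (key_sign xs ys)) (blade (set (key_mul xs ys)))"
  using assms clmul_blade[of "set xs" "set ys"]
  by (simp add: is_key_def blade_sign_set strict_sorted_iff set_key_mul)

lemma blade_sign_idx: "blade_sign (idx i) (idx j) = (if i \<noteq> 0 \<and> j \<noteq> 0 \<and> j \<le> i then -1 else 1)"
proof -
  have "{(a, b). a \<in> idx i \<and> b \<in> idx j \<and> b < a} = (if i \<noteq> 0 \<and> j \<noteq> 0 \<and> j < i then {(i, j)} else {})"
    by (auto simp: idx_def)
  then show ?thesis
    by (auto simp: blade_sign_def idx_def)
qed

lemma idx_sym_diff: "(idx i - idx j) \<union> (idx j - idx i) = (if i = j then {} else idx i \<union> idx j)"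
  by (auto simp: idx_def)

lemma clmul_e_e:
  assumes "i \<le> 7" "j \<le> 7"
  shows "clmul (e i) (e j)
    = clscale (blade_sign (idx i) (idx j)) (blade (if i = j then {} else idx i \<union> idx j))"
proof -
  have "idx i \<subseteq> {1..7}" "idx j \<subseteq> {1..7}"
    using assms by (auto simp: idx_def)
  from clmul_blade[OF this] show ?thesis
    by (simp only: e_def idx_sym_diff)
qed

lemma e_idx: "e a (idx b) = (if a = b then 1 else 0)"
  by (auto simp: e_def blade_def idx_def)

section \<open>Finite lists of signed blades\<close>

type_synonym terms = "(nat list \<times> int) list"

definition cl_of :: "terms \<Rightarrow> cl" where
  "cl_of ps = (\<lambda>A. \<Sum>(B, r)\<leftarrow>ps. if A = set B then of_int r else 0)"

definition terms_ok :: "terms \<Rightarrow> bool" where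
  "terms_ok ps \<longleftrightarrow> list_all (\<lambda>(B, _). is_key B) ps"

definition terms_mul :: "terms \<Rightarrow> terms \<Rightarrow> terms" where
  "terms_mul ps qs = concat (map (\<lambda>(A, r). map (\<lambda>(B, s). (key_mul A B, key_sign A B * r * s)) qs) ps)"

definition terms_scale :: "int \<Rightarrow> terms \<Rightarrow> terms" where
  "terms_scale c ps = map (\<lambda>(B, r). (B, c * r)) ps"

definition coef :: "terms \<Rightarrow> nat list \<Rightarrow> int" where
  "coef ps B = (\<Sum>(B', r)\<leftarrow>ps. if B' = B then r else 0)"

definition same_coefs :: "terms \<Rightarrow> terms \<Rightarrow> bool" where
  "same_coefs ps qs \<longleftrightarrow> list_all (\<lambda>(B, _). coef ps B = coef qs B) (ps @ qs)"

lemma cl_of_Nil [simp]: "cl_of [] = clzero"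
  by (simp add: cl_of_def clzero_def)

lemma cl_of_Cons:
  "cl_of ((B, r) # ps) = cladd (clscale (of_int r) (blade (set B))) (cl_of ps)"
  by (auto simp: cl_of_def cladd_def clscale_def blade_def)

lemma cl_of_append: "cl_of (ps @ qs) = cladd (cl_of ps) (cl_of qs)"
  by (simp add: cl_of_def cladd_def)

lemma cl_of_scale: "cl_of (terms_scale c ps) = clscale (of_int c) (cl_of ps)"
  by (induction ps) (auto simp: terms_scale_def cl_of_Cons clzero_def cladd_def clscale_def algebra_simps)

lemma cl_of_single: "cl_of [(B, 1)] = blade (set B)"
  by (simp add: cl_of_Cons fun_eq_iff cladd_def clscale_def clzero_def)

lemma terms_ok_Nil [simp]: "terms_ok []"
  by (simp add: terms_ok_def)

lemma terms_ok_Cons [simp]: "terms_ok ((B, r) # ps) \<longleftrightarrow> is_key B \<and> terms_ok ps"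
  by (simp add: terms_ok_def)

lemma terms_ok_append [simp]: "terms_ok (ps @ qs) \<longleftrightarrow> terms_ok ps \<and> terms_ok qs"
  by (simp add: terms_ok_def)

lemma terms_ok_scale [simp]: "terms_ok (terms_scale c ps) \<longleftrightarrow> terms_ok ps"
  by (simp add: terms_ok_def terms_scale_def list_all_iff case_prod_beta)

lemma terms_ok_mul: "terms_ok ps \<Longrightarrow> terms_ok qs \<Longrightarrow> terms_ok (terms_mul ps qs)"
  by (fastforce simp: terms_ok_def terms_mul_def list_all_iff intro: is_key_key_mul)

lemma clmul_blade_cl_of:
  assumes "is_key A" "terms_ok qs"
  shows "clmul (blade (set A)) (cl_of qs) = cl_of (map (\<lambda>(B, s). (key_mul A B, key_sign A B * s)) qs)"
  using assms(2)
proof (induction qs)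
  case (Cons q qs)
  obtain B s where q: "q = (B, s)" by fastforce
  have "clmul (blade (set A)) (cl_of (q # qs))
      = cladd (clscale (of_int s) (clmul (blade (set A)) (blade (set B))))
          (clmul (blade (set A)) (cl_of qs))"
    by (simp add: q cl_of_Cons clmul_add_right clmul_scale_right)
  with Cons show ?case
    by (simp add: q assms(1) terms_ok_def clmul_blade_key cl_of_Cons fun_eq_iff cladd_def clscale_def)
qed (simp add: fun_eq_iff)

lemma cl_of_mul:
  assumes "terms_ok ps" "terms_ok qs"
  shows "clmul (cl_of ps) (cl_of qs) = cl_of (terms_mul ps qs)"
  using assms(1)
proof (induction ps)
  case (Cons p ps)
  obtain A r where p: "p = (A, r)" by fastforce
  have "terms_mul (p # ps) qs
      = terms_scale r (map (\<lambda>(B, s). (key_mul A B, key_sign A B * s)) qs) @ terms_mul ps qs"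
    by (simp add: p terms_mul_def terms_scale_def case_prod_beta algebra_simps)
  moreover have "is_key A" "terms_ok ps"
    using Cons.prems by (simp_all add: p terms_ok_def)
  ultimately show ?case
    using Cons.IH by (simp add: p assms(2) cl_of_Cons cl_of_append cl_of_scale clmul_add_left
        clmul_scale_left clmul_blade_cl_of)
qed (simp add: terms_mul_def)

lemma coef_notin: "B \<notin> fst ` set ps \<Longrightarrow> coef ps B = 0"
  unfolding coef_def by (induction ps) auto

lemma cl_of_by_coef:
  "cl_of ps A = (\<Sum>B\<in>fst ` set ps. if A = set B then of_int (coef ps B) else 0)"
proof (induction ps)
  case (Cons p ps)
  obtain B r where p: "p = (B, r)" by fastforce
  let ?K = "fst ` set ps"
  have "(\<Sum>B'\<in>insert B ?K. if A = set B' then of_int (coef (p # ps) B') else 0)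
      = (\<Sum>B'\<in>insert B ?K. if B' = B then if A = set B then of_int r else 0 else 0)
        + (\<Sum>B'\<in>insert B ?K. if A = set B' then of_int (coef ps B') else 0)"
    by (subst sum.distrib[symmetric], intro sum.cong refl) (simp add: p coef_def)
  also have "\<dots> = (if A = set B then of_int r else 0) + cl_of ps A"
    using Cons.IH by (simp add: coef_notin sum.insert_if)
  finally show ?case by (simp add: p cl_of_def)
qed (simp add: cl_of_def)

lemma cl_of_by_coef_superset:
  assumes "fst ` set ps \<subseteq> K" "finite K"
  shows "cl_of ps A = (\<Sum>B\<in>K. if A = set B then of_int (coef ps B) else 0)"
  unfolding cl_of_by_coef using assms by (intro sum.mono_neutral_left) (auto simp: coef_notin)

lemma cl_of_eq_if_same_coefs:
  assumes "same_coefs ps qs"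
  shows "cl_of ps = cl_of qs"
proof
  fix A
  let ?K = "fst ` set (ps @ qs)"
  have "coef ps B = coef qs B" if "B \<in> ?K" for B
    using assms that by (auto simp: same_coefs_def list_all_iff)
  moreover have "cl_of ps A = (\<Sum>B\<in>?K. if A = set B then of_int (coef ps B) else 0)"
    "cl_of qs A = (\<Sum>B\<in>?K. if A = set B then of_int (coef qs B) else 0)"
    by (auto intro: cl_of_by_coef_superset)
  ultimately show "cl_of ps A = cl_of qs A"
    by (metis (no_types, lifting) sum.cong)
qed

lemma cl_of_at_key:
  assumes "terms_ok ps" "is_key B"
  shows "cl_of ps (set B) = of_int (coef ps B)"
proof -
  have "set B = set B' \<longleftrightarrow> B' = B" if "B' \<in> insert B (fst ` set ps)" for B'
    using that assms sorted_distinct_set_unique[of B B']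
    by (auto simp: terms_ok_def list_all_iff is_key_def strict_sorted_iff)
  then have "cl_of ps (set B) = (\<Sum>B'\<in>insert B (fst ` set ps). if B' = B then of_int (coef ps B) else 0)"
    by (subst cl_of_by_coef_superset[of _ "insert B (fst ` set ps)"]) (auto intro!: sum.cong)
  then show ?thesis by simp
qed

definition basis_key :: "nat \<Rightarrow> nat list" where
  "basis_key j = (if j = 0 then [] else [j])"

lemma idx_eq_set_basis_key: "idx j = set (basis_key j)"
  by (simp add: idx_def basis_key_def)

lemma is_key_basis_key: "j \<le> 7 \<Longrightarrow> is_key (basis_key j)"
  by (simp add: is_key_def basis_key_def)

lemma e_eq_cl_of: "e j = cl_of [(basis_key j, 1)]"
  by (simp add: e_def cl_of_single idx_eq_set_basis_key)

lemma clone_eq_cl_of: "clone = cl_of [([], 1)]"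
  by (simp add: clone_def cl_of_single)

definition E_terms :: "nat list \<Rightarrow> terms" where
  "E_terms is = foldr (\<lambda>i ps. terms_mul [(basis_key i, 1)] ps) is [([], 1)]"

lemma terms_ok_E_terms: "\<forall>i\<in>set is. i \<le> 7 \<Longrightarrow> terms_ok (E_terms is)"
proof (induction "is")
  case (Cons i "is")
  then have "terms_ok [(basis_key i, 1)]" "terms_ok (E_terms is)"
    by (simp_all add: is_key_basis_key)
  then show ?case
    by (simp add: E_terms_def terms_ok_mul)
qed (simp add: E_terms_def is_key_def)

lemma E_eq_cl_of: "\<forall>i\<in>set is. i \<le> 7 \<Longrightarrow> E is = cl_of (E_terms is)"
proof (induction "is")
  case (Cons i "is")
  then have "terms_ok [(basis_key i, 1)]" "terms_ok (E_terms is)"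
    by (simp_all add: is_key_basis_key terms_ok_E_terms)
  with Cons show ?case
    by (simp add: E_def E_terms_def e_eq_cl_of cl_of_mul)
qed (simp add: E_def E_terms_def clone_eq_cl_of)

definition W_terms :: terms where
  "W_terms = E_terms [1,2,3] @ E_terms [1,4,5] @ E_terms [1,7,6] @ E_terms [2,4,6]
    @ E_terms [2,5,7] @ E_terms [3,4,7] @ E_terms [3,6,5]"

definition I_terms :: terms where
  "I_terms = terms_mul (([], 1) # terms_mul W_terms (E_terms [1,2,3,4,5,6,7]))
                       (([], 1) # terms_scale (-1) (E_terms [1,2,3,4,5,6,7]))"

lemma terms_ok_I_terms: "terms_ok I_terms"
  by code_simp

lemma W_eq_cl_of: "W = cl_of W_terms"
  by (simp add: W_def W_terms_def E_eq_cl_of cl_of_append)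

lemma Icl_eq_cl_of: "Icl = clscale (1/16) (cl_of I_terms)"
proof -
  let ?E7 = "E_terms [1,2,3,4,5,6,7]"
  have ok: "terms_ok W_terms" "terms_ok ?E7"
    by (simp_all add: W_terms_def terms_ok_E_terms)
  then have "cladd clone (clmul W (E [1,2,3,4,5,6,7])) = cl_of (([], 1) # terms_mul W_terms ?E7)"
    by (simp add: W_eq_cl_of E_eq_cl_of clone_eq_cl_of cl_of_mul cl_of_Cons fun_eq_iff
        cladd_def clscale_def clzero_def)
  moreover have "clsub clone (E [1,2,3,4,5,6,7]) = cl_of (([], 1) # terms_scale (-1) ?E7)"
    by (simp add: clone_eq_cl_of E_eq_cl_of cl_of_Cons cl_of_scale fun_eq_iff clsub_def cladd_def
        clscale_def clzero_def)
  ultimately show ?thesis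
    using ok by (simp add: Icl_def I_terms_def cl_of_mul terms_ok_mul is_key_def)
qed

section \<open>Right multiples of \<open>I\<close>\<close>

definition coef_combination :: "(nat list \<times> terms) list \<Rightarrow> terms \<Rightarrow> terms" where
  "coef_combination Us T = filter (\<lambda>(_, r). r \<noteq> 0) (concat (map (\<lambda>(K, U). terms_scale (coef T K) U) Us))"

text \<open>Checked by evaluation: for every blade \<open>e\<^sub>A\<close> of grade at most 2, the element
  \<open>T = 16 e\<^sub>A I\<close> equals \<open>\<Sum>\<^sub>j c\<^sub>j (16 e\<^sub>j I)\<close>, where \<open>c\<^sub>j\<close> is the coefficient of \<open>T\<close> at \<open>e\<^sub>j\<close>.
  The let-bindings make the evaluation compute \<open>I\<close> and the \<open>e\<^sub>j I\<close> only once.\<close>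

lemma Icl_expansion_check:
  "let I = I_terms; Us = map (\<lambda>j. (basis_key j, terms_mul [(basis_key j, 1)] I)) [0..<8] in
   list_all (\<lambda>A. is_key A \<and> (let T = terms_mul [(A, 1)] I in same_coefs T (coef_combination Us T)))
    (filter (\<lambda>A. length A \<le> 2) (subseqs [1..<8]))"
  by code_simp

lemma cl_of_filter_nonzero: "cl_of (filter (\<lambda>(_, r). r \<noteq> 0) ps) = cl_of ps"
  by (induction ps) (auto simp: cl_of_Cons fun_eq_iff cladd_def clscale_def)

lemma cl_of_coef_combination:
  "cl_of (coef_combination Us T) C = (\<Sum>(K, U)\<leftarrow>Us. of_int (coef T K) * cl_of U C)"
  by (induction Us) (auto simp: coef_combination_def cl_of_filter_nonzero cl_of_append cl_of_scale
      cladd_def clscale_def clzero_def)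

lemma clmul_blade_Icl_expansion:
  assumes "A \<subseteq> {1..7}" "card A \<le> 2"
  shows "clmul (blade A) Icl C = 16 * (\<Sum>j\<le>7. clmul (blade A) Icl (idx j) * clmul (e j) Icl C)"
proof -
  obtain B where B: "B \<in> set (subseqs [1..<8])" "A = set B"
  proof -
    have "{1..<8} = {1..7::nat}" by auto
    then show ?thesis using that subset_subseqs[of A "[1..<8]"] assms(1) by auto
  qed
  then have "length B \<le> 2"
    using assms(2) subseqs_distinctD[OF B(1)] by (simp add: distinct_card[symmetric])
  define T where "T = terms_mul [(B, 1)] I_terms"
  define U where "U j = terms_mul [(basis_key j, 1)] I_terms" for j
  have "is_key B" and same: "same_coefs T (coef_combination (map (\<lambda>j. (basis_key j, U j)) [0..<8]) T)"
    using Icl_expansion_check B(1) \<open>length B \<le> 2\<close>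
    by (auto simp: Let_def list_all_iff T_def U_def)
  then have ok: "terms_ok T" "\<And>j. j \<le> 7 \<Longrightarrow> terms_ok (U j)"
    by (auto simp: T_def U_def terms_ok_I_terms is_key_basis_key intro!: terms_ok_mul)
  have blade: "clmul (blade A) Icl = clscale (1/16) (cl_of T)"
    using \<open>is_key B\<close> by (simp add: B(2) T_def Icl_eq_cl_of clmul_scale_right cl_of_single[symmetric]
        cl_of_mul terms_ok_I_terms)
  have ej: "clmul (e j) Icl = clscale (1/16) (cl_of (U j))" if "j \<le> 7" for j
    using that by (simp add: U_def e_eq_cl_of Icl_eq_cl_of clmul_scale_right cl_of_mul
        terms_ok_I_terms is_key_basis_key)
  have "cl_of T C = (\<Sum>j<8. of_int (coef T (basis_key j)) * cl_of (U j) C)"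
    using cl_of_eq_if_same_coefs[OF same]
    by (simp add: cl_of_coef_combination interv_sum_list_conv_sum_set_nat atLeast0LessThan)
  also have "\<dots> = (\<Sum>j\<le>7. 16 * clmul (blade A) Icl (idx j) * cl_of (U j) C)"
    using ok \<open>is_key B\<close> by (intro sum.cong) (auto simp: blade clscale_def idx_eq_set_basis_key
        cl_of_at_key is_key_basis_key lessThan_Suc_atMost[of 7, simplified])
  finally show ?thesis
    by (simp add: blade ej clscale_def sum_distrib_left mult_ac)
qed

lemma grade_clzero [simp]: "grade k clzero = clzero"
  by (simp add: grade_def clzero_def fun_eq_iff)

definition grade_at_most :: "nat \<Rightarrow> cl \<Rightarrow> bool" where
  "grade_at_most k x \<longleftrightarrow> (\<forall>A. k < card A \<longrightarrow> x A = 0)"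

lemma clmul_Icl_expansion:
  assumes "grade_at_most 2 x"
  shows "clmul x Icl C = 16 * (\<Sum>j\<le>7. clmul x Icl (idx j) * clmul (e j) Icl C)"
proof -
  have "clmul x Icl C = (\<Sum>A\<in>Pow {1..7}. x A * clmul (blade A) Icl C)"
    by (rule clmul_expand_left)
  also have "\<dots> = (\<Sum>A\<in>Pow {1..7}. \<Sum>j\<le>7.
      16 * (x A * clmul (blade A) Icl (idx j) * clmul (e j) Icl C))"
  proof (intro sum.cong refl)
    fix A :: "nat set" assume "A \<in> Pow {1..7}"
    then show "x A * clmul (blade A) Icl C
        = (\<Sum>j\<le>7. 16 * (x A * clmul (blade A) Icl (idx j) * clmul (e j) Icl C))"
    proof (cases "card A \<le> 2")
      case True
      with \<open>A \<in> Pow {1..7}\<close> show ?thesis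
        by (subst clmul_blade_Icl_expansion) (simp_all add: sum_distrib_left mult_ac)
    next
      case False
      with assms show ?thesis by (simp add: grade_at_most_def)
    qed
  qed
  also have "\<dots> = (\<Sum>j\<le>7. \<Sum>A\<in>Pow {1..7}.
      16 * (x A * clmul (blade A) Icl (idx j) * clmul (e j) Icl C))"
    by (rule sum.swap)
  also have "\<dots> = 16 * (\<Sum>j\<le>7. (\<Sum>A\<in>Pow {1..7}. x A * clmul (blade A) Icl (idx j)) * clmul (e j) Icl C)"
    by (simp add: sum_distrib_left sum_distrib_right)
  also have "\<dots> = 16 * (\<Sum>j\<le>7. clmul x Icl (idx j) * clmul (e j) Icl C)"
    by (simp only: clmul_expand_left[of x Icl "idx _", symmetric])
  finally show ?thesis .
qed

lemma clmul_Icl_eq_zero_iff: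
  assumes "grade_at_most 2 x"
  shows "clmul x Icl = clzero \<longleftrightarrow> grade 0 (clmul x Icl) = clzero \<and> grade 1 (clmul x Icl) = clzero"
proof
  assume low: "grade 0 (clmul x Icl) = clzero \<and> grade 1 (clmul x Icl) = clzero"
  have "clmul x Icl (idx j) = 0" for j
  proof -
    have "clmul x Icl (idx j) = grade (card (idx j)) (clmul x Icl) (idx j)"
      by (simp add: grade_def)
    also have "\<dots> = 0"
      using low by (simp add: idx_def clzero_def)
    finally show ?thesis .
  qed
  then have "clmul x Icl C = 0" for C
    by (subst clmul_Icl_expansion[OF assms]) simp
  then show "clmul x Icl = clzero"
    by (simp add: fun_eq_iff clzero_def)
qed (simp add: grade_def clzero_def)

section \<open>The Dirac operator and the Riesz system\<close>

definition dirac_pairs :: "nat set \<Rightarrow> (nat \<times> nat) set" where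
  "dirac_pairs C = {(i, j). i \<le> 7 \<and> j \<le> 7 \<and> (if i = j then {} else idx i \<union> idx j) = C}"

lemma dirac_as_pair_sum:
  "dirac f x C = (\<Sum>(i, j)\<in>dirac_pairs C. blade_sign (idx i) (idx j) * partial (comp f j) i x)"
proof -
  have "clmul (e i) (e j) C = (if (if i = j then {} else idx i \<union> idx j) = C then blade_sign (idx i) (idx j) else 0)"
    if "i \<le> 7" "j \<le> 7" for i j
    using that by (simp add: clmul_e_e clscale_def blade_def)
  then have "dirac f x C = (\<Sum>i\<le>7. \<Sum>j\<le>7.
      if (if i = j then {} else idx i \<union> idx j) = C then blade_sign (idx i) (idx j) * partial (comp f j) i x else 0)"
    unfolding dirac_def by (intro sum.cong refl) simp
  also have "\<dots> = (\<Sum>(i, j)\<in>{..7} \<times> {..7}.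
      if (if i = j then {} else idx i \<union> idx j) = C then blade_sign (idx i) (idx j) * partial (comp f j) i x else 0)"
    by (rule sum.cartesian_product)
  also have "\<dots> = (\<Sum>(i, j)\<in>dirac_pairs C. blade_sign (idx i) (idx j) * partial (comp f j) i x)"
  proof -
    have "dirac_pairs C = {p \<in> {..7} \<times> {..7}. (if fst p = snd p then {} else idx (fst p) \<union> idx (snd p)) = C}"
      by (auto simp: dirac_pairs_def)
    then show ?thesis
      by (simp add: sum.inter_filter case_prod_unfold)
  qed
  finally show ?thesis .
qed

lemma dirac_scalar_part:
  "dirac f x {} = partial (comp f 0) 0 x - (\<Sum>i\<in>{1..7}. partial (comp f i) i x)"
proof -
  have "dirac_pairs {} = (\<lambda>i. (i, i)) ` {..7}"
    by (auto simp: dirac_pairs_def idx_def)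
  then have "dirac f x {} = (\<Sum>i\<le>7. blade_sign (idx i) (idx i) * partial (comp f i) i x)"
    by (simp add: dirac_as_pair_sum sum.reindex inj_on_def)
  also have "\<dots> = partial (comp f 0) 0 x - (\<Sum>i\<in>{1..7}. partial (comp f i) i x)"
    by (simp add: blade_sign_idx atMost_atLeast0 sum.atLeast_Suc_atMost sum_negf)
  finally show ?thesis .
qed

lemma dirac_vector_part:
  assumes "k \<in> {1..7}"
  shows "dirac f x {k} = partial (comp f k) 0 x + partial (comp f 0) k x"
proof -
  have "dirac_pairs {k} = {(0, k), (k, 0)}"
    using assms by (auto simp: dirac_pairs_def idx_def)
  then show ?thesis
    using assms by (simp add: dirac_as_pair_sum blade_sign_idx)
qed

lemma dirac_bivector_part:
  assumes "a \<in> {1..7}" "b \<in> {1..7}" "a < b"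
  shows "dirac f x {a, b} = partial (comp f b) a x - partial (comp f a) b x"
proof -
  have "(if i = j then {} else idx i \<union> idx j) = {a, b} \<longleftrightarrow> (i, j) = (a, b) \<or> (i, j) = (b, a)"
    for i j
    using assms by (cases "i = 0"; cases "j = 0") (auto simp: idx_def doubleton_eq_iff)
  then have "dirac_pairs {a, b} = {(a, b), (b, a)}"
    using assms by (auto simp: dirac_pairs_def)
  then show ?thesis
    using assms by (simp add: dirac_as_pair_sum blade_sign_idx)
qed

lemma dirac_eq_zero_iff:
  "dirac f x = clzero \<longleftrightarrow>
     partial (comp f 0) 0 x - (\<Sum>i\<in>{1..7}. partial (comp f i) i x) = 0 \<and>
     (\<forall>i\<in>{1..7}. partial (comp f i) 0 x + partial (comp f 0) i x = 0) \<and>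
     (\<forall>i\<in>{1..7}. \<forall>j\<in>{1..7}. i \<noteq> j \<longrightarrow> partial (comp f j) i x - partial (comp f i) j x = 0)"
  (is "_ \<longleftrightarrow> ?scalar \<and> ?vector \<and> ?bivector")
proof
  assume zero: "dirac f x = clzero"
  then have zero0: "dirac f x C = 0" for C by (simp add: clzero_def)
  moreover have "?bivector"
  proof (intro ballI impI)
    fix i j :: nat assume ij: "i \<in> {1..7}" "j \<in> {1..7}" and "i \<noteq> j"
    then consider "i < j" | "j < i" by linarith
    then show "partial (comp f j) i x - partial (comp f i) j x = 0"
    proof cases
      case 1
      with ij show ?thesis using dirac_bivector_part[of i j f x] zero0 by simp
    next
      case 2
      with ij show ?thesis using dirac_bivector_part[of j i f x] zero0 by (simp add: insert_commute)
    qed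
  qed
  moreover have "?scalar"
    using zero0[of "{}"] by (simp add: dirac_scalar_part)
  moreover have "?vector"
  proof
    fix i :: nat assume "i \<in> {1..7}"
    then show "partial (comp f i) 0 x + partial (comp f 0) i x = 0"
      using zero0[of "{i}"] dirac_vector_part[of i f x] by simp
  qed
  ultimately show "?scalar \<and> ?vector \<and> ?bivector"
    by blast
next
  assume riesz: "?scalar \<and> ?vector \<and> ?bivector"
  have "dirac f x C = 0" for C
  proof (cases "dirac_pairs C = {}")
    case True
    then show ?thesis by (simp add: dirac_as_pair_sum)
  next
    case False
    then obtain i j where "i \<le> 7" "j \<le> 7" and C: "C = (if i = j then {} else idx i \<union> idx j)"
      by (auto simp: dirac_pairs_def)
    then consider "C = {}" | "j \<in> {1..7}" "C = {j}" | "i \<in> {1..7}" "C = {i}"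
      | "i \<in> {1..7}" "j \<in> {1..7}" "i < j" "C = {i, j}" | "i \<in> {1..7}" "j \<in> {1..7}" "j < i" "C = {j, i}"
      by (cases "i = j"; cases "i = 0"; cases "j = 0"; cases "i < j") (auto simp: idx_def insert_commute)
    then show ?thesis
    proof cases
      case 1
      with riesz show ?thesis by (simp add: dirac_scalar_part)
    next
      case 2
      with riesz show ?thesis by (simp add: dirac_vector_part)
    next
      case 3
      with riesz show ?thesis by (simp add: dirac_vector_part)
    next
      case 4
      with riesz show ?thesis by (simp add: dirac_bivector_part)
    next
      case 5
      with riesz show ?thesis by (simp add: dirac_bivector_part)
    qed
  qed
  then show "dirac f x = clzero" by (simp add: fun_eq_iff clzero_def)
qed

lemma grade_at_most_dirac: "grade_at_most 2 (dirac f x)"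
  unfolding grade_at_most_def
proof (intro allI impI)
  fix C :: "nat set" assume "2 < card C"
  then have "dirac_pairs C = {}"
    by (auto simp: dirac_pairs_def idx_def card_insert_if split: if_splits)
  then show "dirac f x C = 0" by (simp add: dirac_as_pair_sum)
qed

lemma clmul_dirac_Icl_eq_zero_iff:
  "clmul (dirac f x) Icl = clzero \<longleftrightarrow> (\<forall>k\<in>{0,1,2}. grade k (clmul (dirac f x) Icl) = clzero)"
proof
  assume "\<forall>k\<in>{0,1,2}. grade k (clmul (dirac f x) Icl) = clzero"
  then show "clmul (dirac f x) Icl = clzero"
    using clmul_Icl_eq_zero_iff[OF grade_at_most_dirac] by simp
qed simp

section \<open>A solution of \<open>\<partial>\<^sub>x f I = 0\<close> outside \<open>M_R\<close>\<close>

lemma of_nat_8_inj: "i \<le> 7 \<Longrightarrow> k \<le> 7 \<Longrightarrow> (of_nat i :: 8) = of_nat k \<longleftrightarrow> i = k"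
proof -
  assume "i \<le> 7" "k \<le> 7"
  then have "i \<in> {0,1,2,3,4,5,6,7}" "k \<in> {0,1,2,3,4,5,6,7}" by auto
  then show ?thesis by auto
qed

lemma has_real_derivative_coord_upd:
  "((\<lambda>t. coord_upd x i t $ k) has_real_derivative (if k = of_nat i then 1 else 0)) (at t)"
  by (cases "k = of_nat i") (simp_all add: coord_upd_def)

definition counterexample :: "real^8 \<Rightarrow> cl" where
  "counterexample = (\<lambda>x. clsub (clscale (x $ 2) (e 1)) (clscale (x $ 7) (e 4)))"

lemma has_real_derivative_counterexample:
  assumes "i \<le> 7"
  shows "((\<lambda>t. comp counterexample j (coord_upd x i t)) has_real_derivative
      (if i = 2 then e 1 (idx j) else 0) - (if i = 7 then e 4 (idx j) else 0)) (at t)"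
proof -
  have "(2::8) = of_nat i \<longleftrightarrow> i = 2" "(7::8) = of_nat i \<longleftrightarrow> i = 7"
    using of_nat_8_inj[OF assms, of 2] of_nat_8_inj[OF assms, of 7] by auto
  then show ?thesis
    using has_real_derivative_coord_upd[of x i 2 t] has_real_derivative_coord_upd[of x i 7 t]
    by (auto simp: Defs.comp_def counterexample_def clsub_def clscale_def intro!: derivative_eq_intros)
qed

lemma partial_counterexample:
  assumes "i \<le> 7"
  shows "partial (comp counterexample j) i x
    = (if j = 1 then if i = 2 then 1 else 0 else 0) - (if j = 4 then if i = 7 then 1 else 0 else 0)"
  using DERIV_imp_deriv[OF has_real_derivative_counterexample[OF assms]]
  by (simp add: partial_def e_idx)

lemma dirac_counterexample:
  "dirac counterexample x = clsub (clmul (e 4) (e 7)) (clmul (e 1) (e 2))"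
proof
  fix C
  have "dirac counterexample x C = (\<Sum>i\<le>7. \<Sum>j\<le>7. clmul (e i) (e j) C *
      ((if j = 1 then if i = 2 then 1 else 0 else 0) - (if j = 4 then if i = 7 then 1 else 0 else 0)))"
    unfolding dirac_def by (intro sum.cong refl) (simp add: partial_counterexample)
  also have "\<dots> = clmul (e 2) (e 1) C - clmul (e 7) (e 4) C"
    by (simp add: right_diff_distrib sum_subtractf if_distrib[of "\<lambda>u. _ * u"] sum.delta cong: if_cong)
  also have "\<dots> = clsub (clmul (e 4) (e 7)) (clmul (e 1) (e 2)) C"
    by (simp add: clmul_e_e blade_sign_idx clsub_def clscale_def) (simp add: idx_def insert_commute)
  finally show "dirac counterexample x C = clsub (clmul (e 4) (e 7)) (clmul (e 1) (e 2)) C" .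
qed

lemma counterexample_in_paravector_functions: "counterexample \<in> paravector_functions"
  unfolding paravector_functions_def has_partials_def paravector_def
proof (intro CollectI conjI allI impI)
  fix x A assume "\<forall>j\<le>7. A \<noteq> idx j"
  then have "A \<noteq> idx 1" "A \<noteq> idx 4" by auto
  then show "counterexample x A = 0"
    by (simp add: counterexample_def clsub_def clscale_def e_def blade_def)
next
  fix j i :: nat and x :: "real^8" assume "i \<le> 7"
  then show "(\<lambda>t. comp counterexample j (coord_upd x i t)) differentiable at (x $ of_nat i)"
    using has_real_derivative_counterexample real_differentiable_def by blast
qed

lemma e47_minus_e12_ne_zero: "clsub (clmul (e 4) (e 7)) (clmul (e 1) (e 2)) \<noteq> clzero"
proof
  assume "clsub (clmul (e 4) (e 7)) (clmul (e 1) (e 2)) = clzero"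
  then have "clsub (clmul (e 4) (e 7)) (clmul (e 1) (e 2)) {1, 2} = 0"
    by (simp add: clzero_def)
  then show False
    by (simp add: clmul_e_e blade_sign_idx clsub_def clscale_def) (simp add: idx_def blade_def doubleton_eq_iff)
qed

lemma e47_minus_e12_mul_Icl: "clmul (clsub (clmul (e 4) (e 7)) (clmul (e 1) (e 2))) Icl = clzero"
proof -
  define P where "P = terms_mul [([4], 1)] [([7], 1)] @ terms_scale (-1) (terms_mul [([1], 1)] [([2], 1)])"
  have "terms_ok [([a], 1)]" if "a \<in> {1, 2, 4, 7}" for a
    using that by (auto simp: is_key_def)
  then have P: "clsub (clmul (e 4) (e 7)) (clmul (e 1) (e 2)) = cl_of P" and "terms_ok P"
    by (simp_all add: P_def e_eq_cl_of basis_key_def cl_of_mul cl_of_append cl_of_scale terms_ok_mul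
        fun_eq_iff clsub_def cladd_def clscale_def)
  then have "clmul (cl_of P) Icl = clscale (1/16) (cl_of (terms_mul P I_terms))"
    by (simp add: Icl_eq_cl_of clmul_scale_right cl_of_mul terms_ok_I_terms)
  also have "cl_of (terms_mul P I_terms) = cl_of []"
    by (rule cl_of_eq_if_same_coefs) (unfold P_def, code_simp)
  finally show ?thesis
    unfolding P by (simp add: clscale_def clzero_def)
qed

theorem mainTheorem17:
  shows "M_R = {f \<in> paravector_functions. riesz f}
    \<and> M_R \<subset> {f \<in> paravector_functions. \<forall>x. clmul (dirac f x) Icl = clzero}
    \<and> {f \<in> paravector_functions. \<forall>x. clmul (dirac f x) Icl = clzero}
         = {f \<in> paravector_functions. \<forall>x. \<forall>k\<in>{0,1,2}. grade k (clmul (dirac f x) Icl) = clzero}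
    \<and> (let f = (\<lambda>x::real^8. clsub (clscale (x $ 2) (e 1)) (clscale (x $ 7) (e 4))) in
           f \<in> paravector_functions \<and>
           (\<forall>x. dirac f x = clsub (clmul (e 4) (e 7)) (clmul (e 1) (e 2))) \<and>
           clsub (clmul (e 4) (e 7)) (clmul (e 1) (e 2)) \<noteq> clzero \<and>
           (\<forall>x. \<forall>k\<in>{0,1,2}. grade k (clmul (dirac f x) Icl) = clzero))"
proof (intro conjI)
  show "M_R = {f \<in> paravector_functions. riesz f}"
    by (simp add: M_R_def riesz_def dirac_eq_zero_iff)
  have "counterexample \<in> {f \<in> paravector_functions. \<forall>x. clmul (dirac f x) Icl = clzero} - M_R"
    using counterexample_in_paravector_functions dirac_counterexample e47_minus_e12_ne_zero
      e47_minus_e12_mul_Icl by (simp add: M_R_def)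
  then show "M_R \<subset> {f \<in> paravector_functions. \<forall>x. clmul (dirac f x) Icl = clzero}"
    by (auto simp: M_R_def)
  show "{f \<in> paravector_functions. \<forall>x. clmul (dirac f x) Icl = clzero}
      = {f \<in> paravector_functions. \<forall>x. \<forall>k\<in>{0,1,2}. grade k (clmul (dirac f x) Icl) = clzero}"
    by (simp add: clmul_dirac_Icl_eq_zero_iff)
  show "let f = (\<lambda>x::real^8. clsub (clscale (x $ 2) (e 1)) (clscale (x $ 7) (e 4))) in
      f \<in> paravector_functions \<and>
      (\<forall>x. dirac f x = clsub (clmul (e 4) (e 7)) (clmul (e 1) (e 2))) \<and>
      clsub (clmul (e 4) (e 7)) (clmul (e 1) (e 2)) \<noteq> clzero \<and>
      (\<forall>x. \<forall>k\<in>{0,1,2}. grade k (clmul (dirac f x) Icl) = clzero)"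
    using counterexample_in_paravector_functions dirac_counterexample e47_minus_e12_ne_zero
      e47_minus_e12_mul_Icl by (simp add: counterexample_def clmul_dirac_Icl_eq_zero_iff[symmetric])
qed

end
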